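(* Let $\Omega\subset S^{n-1}$ be a closed set not contained in any closed hemisphere of $S^{n-1}$. Let $h_0:\Omega\rightarrow(0,\infty)$ and $f:\Omega\rightarrow\mathbb{R}$ be continuous, and let $[h_t]$ be a logarithmic family of Wulff shapes generated by $(h_0,f)$. Then for every $Q\in\mathcal{S}_o^n$, $j\neq n$, $q\neq0$, $$\lim_{t\rightarrow0}\frac{\widetilde{W}_{q,j}([h_t],Q)-\widetilde{W}_{q,j}([h_0],Q)}{t}=q\int_{\Omega}f(v)\,d\widetilde{\mathcal{C}}_{q,j}([h_0],Q,v).$$
   Context: $\mathcal{K}_o^n$: convex bodies in $\mathbb{R}^n$ containing the origin in their interiors; $\mathcal{S}_o^n$: compact sets star-shaped about the origin with positive continuous radial function $\rho_Q(x)=\max\{\lambda\ge0:\lambda x\in Q\}$. $h_M$ is the support function, $du$ spherical Lebesgue measure. A logarithmic family of Wulff shapes generated by $(h_0,f)$: for some $\delta>0$ and each $t\in(-\delta,\delta)$, $h_t:\Omega\to(0,\infty)$ is continuous with $\log h_t(v)=\log h_0(v)+tf(v)+o(t,v)$, where $o(t,\cdot)$ is continuous on $\Omega$ and $o(t,\cdot)/t\to0$ uniformly on $\Omega$ as $t\to0$; and $[h_t]=\{x\in\mathbb{R}^n:x\cdot v\le h_t(v)\ \forall v\in\Omega\}$. For $q\in\mathbb{R}$, $j\ne n$, $M\in\mathcal{K}_o^n$, $Q\in\mathcal{S}_o^n$: $\widetilde{W}_{q,j}(M,Q)=\frac1n\int_{S^{n-1}}\rho_M^q\rho_Q^{n-q-j}\,du$;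 $R^*_M(\eta)=\{u\in S^{n-1}:\rho_M(u)u\cdot v=h_M(v)\text{ for some }v\in\eta\}$ for Borel $\eta\subseteq S^{n-1}$; and $\widetilde{\mathcal{C}}_{q,j}(M,Q,\eta)=\frac1n\int_{R^*_M(\eta)}\rho_M^q(u)\rho_Q^{n-q-j}(u)\,du$. *)

theory Defs
  imports "HOL-Analysis.Analysis"
begin

definition unit_cone :: "'a::euclidean_space set \<Rightarrow> 'a set" where
  "unit_cone A = {r *\<^sub>R u | r u. 0 < r \<and> r \<le> 1 \<and> u \<in> A}"

text \<open>Spherical Lebesgue measure: sigma(A) = n * Lebesgue measure of the cone
  {r u : 0 < r <= 1, u in A}; it is defined on the Lebesgue-measurable subsets
  of the sphere.\<close>
definition sphere_measure :: "'a::euclidean_space measure" where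
  "sphere_measure = measure_of (sphere 0 1)
     {A. A \<subseteq> sphere 0 1 \<and> unit_cone A \<in> sets lebesgue}
     (\<lambda>A. ennreal (real DIM('a)) * emeasure lebesgue (unit_cone A))"

definition support_fun :: "'a::euclidean_space set \<Rightarrow> 'a \<Rightarrow> real" where
  "support_fun M v = Sup {x \<bullet> v | x. x \<in> M}"

definition radial_fun :: "'a::euclidean_space set \<Rightarrow> 'a \<Rightarrow> real" where
  "radial_fun Q x = Sup {s. 0 \<le> s \<and> s *\<^sub>R x \<in> Q}"

definition convex_body_o :: "'a::euclidean_space set \<Rightarrow> bool" where
  "convex_body_o M \<longleftrightarrow> convex M \<and> compact M \<and> 0 \<in> interior M"

definition star_body_o :: "'a::euclidean_space set \<Rightarrow> bool" where
  "star_body_o Q \<longleftrightarrow> compact Q \<and> 0 \<in> Q \<and> (\<forall>x\<in>Q. closed_segment 0 x \<subseteq> Q)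
     \<and> (\<forall>u\<in>sphere 0 1. radial_fun Q u > 0) \<and> continuous_on (sphere 0 1) (radial_fun Q)"

definition wulff_shape :: "'a::euclidean_space set \<Rightarrow> ('a \<Rightarrow> real) \<Rightarrow> 'a set" where
  "wulff_shape \<Omega> h = {x. \<forall>v\<in>\<Omega>. x \<bullet> v \<le> h v}"

definition closed_hemisphere :: "'a::euclidean_space \<Rightarrow> 'a set" where
  "closed_hemisphere u = {v \<in> sphere 0 1. v \<bullet> u \<ge> 0}"

definition log_family :: "'a::euclidean_space set \<Rightarrow> (real \<Rightarrow> 'a \<Rightarrow> real) \<Rightarrow> ('a \<Rightarrow> real) \<Rightarrow> bool" where
  "log_family \<Omega> h f \<longleftrightarrow> (\<exists>\<delta>>0. \<exists>e::real \<Rightarrow> 'a \<Rightarrow> real.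
      (\<forall>t\<in>{-\<delta><..<\<delta>}. continuous_on \<Omega> (h t) \<and> (\<forall>v\<in>\<Omega>. h t v > 0)
         \<and> continuous_on \<Omega> (e t)
         \<and> (\<forall>v\<in>\<Omega>. ln (h t v) = ln (h 0 v) + t * f v + e t v))
      \<and> uniform_limit \<Omega> (\<lambda>t v. e t v / t) (\<lambda>v. 0) (at 0))"

definition dual_quermass :: "real \<Rightarrow> real \<Rightarrow> 'a::euclidean_space set \<Rightarrow> 'a set \<Rightarrow> real" where
  "dual_quermass q j M Q = (1 / real DIM('a)) *
     (\<integral>u. radial_fun M u powr q * radial_fun Q u powr (real DIM('a) - q - j) \<partial>sphere_measure)"

definition radial_gauss_image_star :: "'a::euclidean_space set \<Rightarrow> 'a set \<Rightarrow> 'a set" where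
  "radial_gauss_image_star M \<eta> =
     {u \<in> sphere 0 1. \<exists>v\<in>\<eta>. radial_fun M u * (u \<bullet> v) = support_fun M v}"

definition dual_curv_measure :: "real \<Rightarrow> real \<Rightarrow> 'a::euclidean_space set \<Rightarrow> 'a set \<Rightarrow> 'a measure" where
  "dual_curv_measure q j M Q = measure_of (sphere 0 1) (sets (restrict_space borel (sphere 0 1)))
     (\<lambda>\<eta>. ennreal (1 / real DIM('a)) *
        (\<integral>\<^sup>+u\<in>radial_gauss_image_star M \<eta>.
            ennreal (radial_fun M u powr q * radial_fun Q u powr (real DIM('a) - q - j)) \<partial>sphere_measure))"

end

(*
  The radial function of [h_t] is 1 / gamma_t, where gamma_t(u) = max over v in Omega of
  (u . v) / h_t(v). As ln h_t = ln h_0 + t f + o(t) uniformly, ln gamma_0(u) - ln gamma_t(u) lies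
  between the increments ln h_t - ln h_0 at a maximizer for t and at a maximizer for 0. So it
  is O(t) uniformly in u, and at every u where the maximizer alpha(u) for t = 0 is unique, the
  maximizers for t converge to alpha(u) and the derivative at t = 0 is f(alpha(u)).
  The directions u where [h_0] has two outer unit normals at rho(u) u form a null set: the cone
  over them consists of points x for which x . p has two maximizers on a fixed set P, and that
  set is covered by countably many Lipschitz graphs over hyperplanes. Dominated convergence then
  differentiates (1/n) * integral of rho_t^q rho_Q^(n-q-j) under the integral sign, and the
  derivative (q/n) * integral of f(alpha(u)) rho_0^q rho_Q^(n-q-j) is the integral of f against
  the dual curvature measure, which is the image of the density rho_0^q rho_Q^(n-q-j) / n
  under the radial Gauss map alpha.
*)
theory Submission
  imports Defs
begin

section \<open>Limits and integrals\<close>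

lemma tendsto_unique_maximizer:
  fixes \<phi> :: "'a::metric_space \<Rightarrow> real"
  assumes K: "compact K" "continuous_on K \<phi>"
    and a: "a \<in> K" "\<And>v. v \<in> K \<Longrightarrow> v \<noteq> a \<Longrightarrow> \<phi> v < \<phi> a"
    and x: "\<forall>\<^sub>F t in F. x t \<in> K" "((\<lambda>t. \<phi> (x t)) \<longlongrightarrow> \<phi> a) F"
  shows "(x \<longlongrightarrow> a) F"
proof (rule tendstoI)
  fix \<epsilon> :: real assume "\<epsilon> > 0"
  define K' where "K' = K \<inter> - ball a \<epsilon>"
  have "compact K'"
    unfolding K'_def using K(1) by (intro compact_Int_closed) auto
  show "\<forall>\<^sub>F t in F. dist (x t) a < \<epsilon>"
  proof (cases "K' = {}")
    case True
    show ?thesis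
      using x(1) by (rule eventually_mono) (use True in \<open>auto simp: K'_def dist_commute\<close>)
  next
    case False
    obtain w where w: "w \<in> K'" "\<And>v. v \<in> K' \<Longrightarrow> \<phi> v \<le> \<phi> w"
      using continuous_attains_sup[OF \<open>compact K'\<close> False continuous_on_subset[OF K(2)]]
      by (auto simp: K'_def)
    have "w \<noteq> a"
      using w(1) \<open>\<epsilon> > 0\<close> by (auto simp: K'_def)
    with a(2) w(1) have "\<phi> w < \<phi> a"
      by (simp add: K'_def)
    with x(2) have "\<forall>\<^sub>F t in F. \<phi> w < \<phi> (x t)"
      by (rule order_tendstoD)
    with x(1) show ?thesis
      by eventually_elim (use w(2) in \<open>force simp: K'_def dist_commute\<close>)
  qed
qed

lemma integral_dominated_convergence_at:
  fixes s :: "'c::first_countable_topology \<Rightarrow> 'a \<Rightarrow> 'b::{banach, second_countable_topology}"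
    and w :: "'a \<Rightarrow> real"
  assumes f: "f \<in> borel_measurable M" and w: "integrable M w"
    and s: "\<forall>\<^sub>F t in at a. s t \<in> borel_measurable M \<and> (AE x in M. norm (s t x) \<le> w x)"
    and lim: "AE x in M. ((\<lambda>t. s t x) \<longlongrightarrow> f x) (at a)"
  shows "((\<lambda>t. integral\<^sup>L M (s t)) \<longlongrightarrow> integral\<^sup>L M f) (at a)"
  unfolding tendsto_at_iff_sequentially
proof (intro allI impI)
  fix X :: "nat \<Rightarrow> 'c" assume X: "\<forall>i. X i \<in> UNIV - {a}" "X \<longlonglongrightarrow> a"
  then have X_at: "filterlim X (at a) sequentially"
    by (intro filterlim_atI) auto
  from filterlim_iff[THEN iffD1, OF X_at, rule_format, OF s]
  obtain N where N: "\<And>n. N \<le> n \<Longrightarrow> s (X n) \<in> borel_measurable M \<and> (AE x in M. norm (s (X n) x) \<le> w x)"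
    by (auto simp: eventually_sequentially)
  show "((\<lambda>t. integral\<^sup>L M (s t)) \<circ> X) \<longlonglongrightarrow> integral\<^sup>L M f"
    unfolding comp_def
  proof (rule LIMSEQ_offset[where k = N], rule integral_dominated_convergence[OF f _ w])
    show "(\<lambda>x. s (X (n + N)) x) \<in> borel_measurable M" "AE x in M. norm (s (X (n + N)) x) \<le> w x" for n
      using N[of "n + N"] by simp_all
    show "AE x in M. (\<lambda>n. s (X (n + N)) x) \<longlonglongrightarrow> f x"
      using lim
    proof eventually_elim
      case (elim x)
      then show ?case
        by (intro LIMSEQ_ignore_initial_segment filterlim_compose[OF elim X_at])
    qed
  qed
qed

lemma abs_exp_minus_one_le: "\<bar>exp x - 1\<bar> \<le> \<bar>x\<bar> * exp \<bar>x\<bar>"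
  for x :: real
proof (cases "x \<ge> 0")
  case True
  have "1 - x \<le> exp (- x)"
    using exp_ge_add_one_self[of "- x"] by simp
  then have "(1 - x) * exp x \<le> 1"
    using mult_right_mono[of "1 - x" "exp (- x)" "exp x"] by (simp add: exp_minus field_simps)
  with True show ?thesis
    by (simp add: algebra_simps)
next
  case False
  have "1 - exp x \<le> - x"
    using exp_ge_add_one_self[of x] by linarith
  also have "\<dots> \<le> \<bar>x\<bar> * exp \<bar>x\<bar>"
    using False by simp
  finally show ?thesis
    using False by simp
qed

section \<open>Directions with two maximizers form a null set\<close>

lemma negligible_Lipschitz_graph:
  fixes S :: "'a::euclidean_space set"
  assumes e: "norm e = 1" and c: "c < 1"
    and flat: "\<And>x y. x \<in> S \<Longrightarrow> y \<in> S \<Longrightarrow> \<bar>(x - y) \<bullet> e\<bar> \<le> c * norm (x - y)"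
  shows "negligible S"
proof -
  define \<pi> where "\<pi> x = x - (x \<bullet> e) *\<^sub>R e" for x
  have \<pi>_diff: "\<pi> x - \<pi> y = (x - y) - ((x - y) \<bullet> e) *\<^sub>R e" for x y
    by (simp add: \<pi>_def algebra_simps inner_diff_left)
  have lip: "norm (x - y) \<le> norm (\<pi> x - \<pi> y) / (1 - c)" if "x \<in> S" "y \<in> S" for x y
  proof -
    have "norm (x - y) \<le> norm (\<pi> x - \<pi> y) + \<bar>(x - y) \<bullet> e\<bar>"
      using norm_triangle_ineq2[of "x - y" "((x - y) \<bullet> e) *\<^sub>R e"] e by (simp add: \<pi>_diff)
    with flat[OF that] c show ?thesis by (simp add: field_simps)
  qed
  have "inj_on \<pi> S"
  proof (rule inj_onI)
    fix x y assume "x \<in> S" "y \<in> S" "\<pi> x = \<pi> y"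
    then have "norm (x - y) \<le> norm (\<pi> x - \<pi> y) / (1 - c)" by (intro lip)
    with \<open>\<pi> x = \<pi> y\<close> show "x = y" by simp
  qed
  define g where "g = inv_into S \<pi>"
  have g: "g (\<pi> x) = x" if "x \<in> S" for x
    unfolding g_def by (rule inv_into_f_f[OF \<open>inj_on \<pi> S\<close> that])
  have "negligible (g ` \<pi> ` S)"
  proof (rule negligible_locally_Lipschitz_image)
    have "\<pi> ` S \<subseteq> {z. e \<bullet> z = 0}"
      using e by (auto simp: \<pi>_def inner_diff_right inner_commute dot_square_norm)
    moreover have "negligible {z. e \<bullet> z = 0}"
      using e negligible_hyperplane[of e 0] by fastforce
    ultimately show "negligible (\<pi> ` S)"
      using negligible_subset by blast
    fix z assume "z \<in> \<pi> ` S"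
    then obtain x where x: "x \<in> S" "z = \<pi> x" by blast
    have "norm (g y - g z) \<le> 1 / (1 - c) * norm (y - z)" if "y \<in> \<pi> ` S" for y
    proof -
      from that obtain x' where x': "x' \<in> S" "y = \<pi> x'" by blast
      show ?thesis using lip[OF x'(1) x(1)] by (simp add: x x' g)
    qed
    then show "\<exists>T B. open T \<and> z \<in> T \<and> (\<forall>y\<in>\<pi> ` S \<inter> T. norm (g y - g z) \<le> B * norm (y - z))"
      by blast
  qed simp
  moreover have "S \<subseteq> g ` \<pi> ` S"
    using g by (metis image_eqI subsetI)
  ultimately show ?thesis using negligible_subset by blast
qed

lemma inner_lower_bound_near:
  fixes w p a :: "'a::real_inner"
  assumes "0 \<le> w \<bullet> p" "norm (p - a) \<le> r"
  shows "- (norm w * r) \<le> w \<bullet> a"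
proof -
  have "\<bar>w \<bullet> (p - a)\<bar> \<le> norm w * r"
    using Cauchy_Schwarz_ineq2[of w "p - a"] assms(2) by (meson mult_left_mono norm_ge_zero order_trans)
  with assms(1) show ?thesis by (simp add: inner_diff_right)
qed

definition multiple_argmax :: "'a::real_inner set \<Rightarrow> 'a set" where
  "multiple_argmax P =
     {x. \<exists>p1\<in>P. \<exists>p2\<in>P. p1 \<noteq> p2 \<and> (\<forall>p\<in>P. x \<bullet> p \<le> x \<bullet> p1 \<and> x \<bullet> p \<le> x \<bullet> p2)}"

lemma negligible_argmax_near_two_points:
  fixes P :: "'a::euclidean_space set"
  assumes "a1 \<noteq> a2"
  defines "d \<equiv> norm (a1 - a2)"
  shows "negligible {x. \<exists>p1\<in>P. \<exists>p2\<in>P. (\<forall>p\<in>P. x \<bullet> p \<le> x \<bullet> p1 \<and> x \<bullet> p \<le> x \<bullet> p2)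
            \<and> norm (p1 - a1) < d/8 \<and> norm (p2 - a2) < d/8}" (is "negligible ?F")
proof (rule negligible_Lipschitz_graph)
  have d: "d > 0" using assms by (simp add: d_def)
  show "norm ((a1 - a2) /\<^sub>R d) = 1" using d by (simp add: d_def)
  fix x y assume "x \<in> ?F" "y \<in> ?F"
  then obtain p1 p2 q1 q2 where p: "p1 \<in> P" "p2 \<in> P" "\<forall>p\<in>P. x \<bullet> p \<le> x \<bullet> p1 \<and> x \<bullet> p \<le> x \<bullet> p2"
      "norm (p1 - a1) < d/8" "norm (p2 - a2) < d/8"
    and q: "q1 \<in> P" "q2 \<in> P" "\<forall>p\<in>P. y \<bullet> p \<le> y \<bullet> q1 \<and> y \<bullet> p \<le> y \<bullet> q2"
      "norm (q1 - a1) < d/8" "norm (q2 - a2) < d/8"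
    by blast
  \<comment> \<open>Maximizers move monotonically: \<open>(x - y) \<bullet> (p - q) \<ge> 0\<close> when \<open>p\<close> maximizes \<open>x\<close> and \<open>q\<close> maximizes \<open>y\<close>.\<close>
  have "x \<bullet> q2 \<le> x \<bullet> p1" "y \<bullet> p1 \<le> y \<bullet> q2" "x \<bullet> q1 \<le> x \<bullet> p2" "y \<bullet> p2 \<le> y \<bullet> q1"
    using p q by auto
  then have "0 \<le> (x - y) \<bullet> (p1 - q2)" "0 \<le> (x - y) \<bullet> (p2 - q1)"
    by (simp_all add: inner_diff_left inner_diff_right)
  moreover have "norm ((p1 - q2) - (a1 - a2)) \<le> d/4" "norm ((p2 - q1) - (a2 - a1)) \<le> d/4"
    using p(4,5) q(4,5) norm_triangle_ineq4[of "p1 - a1" "q2 - a2"] norm_triangle_ineq4[of "p2 - a2" "q1 - a1"]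
    by (simp_all add: algebra_simps)
  ultimately have "- (norm (x - y) * (d/4)) \<le> (x - y) \<bullet> (a1 - a2)"
    "- (norm (x - y) * (d/4)) \<le> (x - y) \<bullet> (a2 - a1)"
    by (blast intro: inner_lower_bound_near)+
  then have "\<bar>(x - y) \<bullet> (a1 - a2)\<bar> \<le> norm (x - y) * (d/4)"
    by (simp only: abs_le_iff inner_diff_right) linarith
  then show "\<bar>(x - y) \<bullet> ((a1 - a2) /\<^sub>R d)\<bar> \<le> 1/4 * norm (x - y)"
    using d by (simp add: divide_simps abs_mult mult.commute)
qed simp

lemma negligible_multiple_argmax:
  fixes P :: "'a::euclidean_space set"
  shows "negligible (multiple_argmax P)"
proof -
  obtain D :: "'a set" where D: "countable D" "\<And>X. open X \<Longrightarrow> X \<noteq> {} \<Longrightarrow> \<exists>d\<in>D. d \<in> X"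
    using countable_dense_setE by blast
  define F where "F a1 a2 = {x. \<exists>p1\<in>P. \<exists>p2\<in>P. (\<forall>p\<in>P. x \<bullet> p \<le> x \<bullet> p1 \<and> x \<bullet> p \<le> x \<bullet> p2)
            \<and> norm (p1 - a1) < norm (a1 - a2)/8 \<and> norm (p2 - a2) < norm (a1 - a2)/8}" for a1 a2
  have "negligible (\<Union>(a1, a2) \<in> D \<times> D - {(a, a) | a. True}. F a1 a2)"
    using D(1) negligible_argmax_near_two_points
    by (intro negligible_countable_Union countable_image countable_Diff countable_SIGMA)
       (auto simp: F_def)
  moreover have "multiple_argmax P \<subseteq> (\<Union>(a1, a2) \<in> D \<times> D - {(a, a) | a. True}. F a1 a2)"
  proof
    fix x assume "x \<in> multiple_argmax P"
    then obtain p1 p2 where p: "p1 \<in> P" "p2 \<in> P" "p1 \<noteq> p2"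
        "\<forall>p\<in>P. x \<bullet> p \<le> x \<bullet> p1 \<and> x \<bullet> p \<le> x \<bullet> p2"
      unfolding multiple_argmax_def by blast
    define r where "r = norm (p1 - p2) / 20"
    have r: "r > 0" using p(3) by (simp add: r_def)
    obtain a1 a2 where a: "a1 \<in> D" "a2 \<in> D" "dist p1 a1 < r" "dist p2 a2 < r"
      using D(2)[of "ball p1 r"] D(2)[of "ball p2 r"] r by (auto simp: dist_commute)
    have "norm (p1 - p2) \<le> dist p1 a1 + norm (a1 - a2) + dist p2 a2"
      using norm_triangle_ineq[of "p1 - a1" "a1 - a2"] norm_triangle_ineq[of "p1 - a2" "a2 - p2"]
      by (simp add: dist_norm norm_minus_commute)
    then have "18 * r \<le> norm (a1 - a2)" using a(3,4) by (simp add: r_def)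
    then have "a1 \<noteq> a2" "norm (p1 - a1) < norm (a1 - a2)/8" "norm (p2 - a2) < norm (a1 - a2)/8"
      using a(3,4) r by (auto simp: dist_norm)
    with p a(1,2) show "x \<in> (\<Union>(a1, a2) \<in> D \<times> D - {(a, a) | a. True}. F a1 a2)"
      unfolding F_def by blast
  qed
  ultimately show ?thesis using negligible_subset by blast
qed

section \<open>Spherical Lebesgue measure\<close>

lemma unit_cone_eq:
  fixes A :: "'a::euclidean_space set"
  assumes "A \<subseteq> sphere 0 1"
  shows "unit_cone A = {x. x \<noteq> 0 \<and> norm x \<le> 1 \<and> x /\<^sub>R norm x \<in> A}"
proof (intro set_eqI iffI)
  fix x assume "x \<in> unit_cone A"
  then obtain r u where "x = r *\<^sub>R u" "0 < r" "r \<le> 1" "u \<in> A"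
    unfolding unit_cone_def by blast
  with assms show "x \<in> {x. x \<noteq> 0 \<and> norm x \<le> 1 \<and> x /\<^sub>R norm x \<in> A}" by auto
next
  fix x :: 'a assume "x \<in> {x. x \<noteq> 0 \<and> norm x \<le> 1 \<and> x /\<^sub>R norm x \<in> A}"
  then show "x \<in> unit_cone A" unfolding unit_cone_def
    by (intro CollectI exI[of _ "norm x"] exI[of _ "x /\<^sub>R norm x"]) auto
qed

lemma unit_cone_mono: "A \<subseteq> B \<Longrightarrow> unit_cone A \<subseteq> unit_cone B"
  unfolding unit_cone_def by blast

lemma unit_cone_sphere: "unit_cone (sphere (0::'a::euclidean_space) 1) = cball 0 1 - {0}"
  by (auto simp: unit_cone_eq)

lemma unit_cone_Int_sphere_borel:
  fixes B :: "'a::euclidean_space set"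
  assumes "B \<in> sets borel"
  shows "unit_cone (B \<inter> sphere 0 1) \<in> sets borel"
proof -
  have "unit_cone (B \<inter> sphere 0 1) = (cball 0 1 - {0}) \<inter> (\<lambda>x::'a. x /\<^sub>R norm x) -` B"
    by (auto simp: unit_cone_eq)
  moreover have "(\<lambda>x::'a. x /\<^sub>R norm x) -` B \<in> sets borel"
    using measurable_sets_borel[OF _ assms] by measurable
  ultimately show ?thesis by auto
qed

lemma sigma_algebra_sphere_sets:
  "sigma_algebra (sphere (0::'a::euclidean_space) 1)
     {A. A \<subseteq> sphere 0 1 \<and> unit_cone A \<in> sets lebesgue}"
  unfolding sigma_algebra_iff2
proof (intro conjI ballI allI impI)
  fix A :: "'a set" assume "A \<in> {A. A \<subseteq> sphere 0 1 \<and> unit_cone A \<in> sets lebesgue}"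
  moreover have "unit_cone (sphere 0 1 - A) = (cball 0 1 - {0}) - unit_cone A"
    using calculation by (auto simp: unit_cone_eq)
  ultimately show "sphere 0 1 - A \<in> {A. A \<subseteq> sphere 0 1 \<and> unit_cone A \<in> sets lebesgue}"
    by auto
next
  fix A :: "nat \<Rightarrow> 'a set" assume "range A \<subseteq> {A. A \<subseteq> sphere 0 1 \<and> unit_cone A \<in> sets lebesgue}"
  moreover have "unit_cone (\<Union>i. A i) = (\<Union>i. unit_cone (A i))"
    unfolding unit_cone_def by blast
  ultimately show "(\<Union>i. A i) \<in> {A. A \<subseteq> sphere 0 1 \<and> unit_cone A \<in> sets lebesgue}"
    by auto
qed (auto simp: unit_cone_def)

lemma space_sphere_measure: "space (sphere_measure :: 'a::euclidean_space measure) = sphere 0 1"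
  unfolding sphere_measure_def
  by (simp add: sigma_algebra.space_measure_of_eq[OF sigma_algebra_sphere_sets])

lemma sets_sphere_measure:
  "sets (sphere_measure :: 'a::euclidean_space measure) =
     {A. A \<subseteq> sphere 0 1 \<and> unit_cone A \<in> sets lebesgue}"
  unfolding sphere_measure_def
  by (simp add: sigma_algebra.sets_measure_of_eq[OF sigma_algebra_sphere_sets])

lemma emeasure_sphere_measure:
  fixes A :: "'a::euclidean_space set"
  assumes "A \<in> sets sphere_measure"
  shows "emeasure sphere_measure A = ennreal (real DIM('a)) * emeasure lebesgue (unit_cone A)"
proof -
  have ca: "countably_additive {A. A \<subseteq> sphere (0::'a) 1 \<and> unit_cone A \<in> sets lebesgue}
          (\<lambda>A. ennreal (real DIM('a)) * emeasure lebesgue (unit_cone A))"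
    unfolding countably_additive_def
  proof (intro allI impI)
    fix A :: "nat \<Rightarrow> 'a set"
    assume A: "range A \<subseteq> {A. A \<subseteq> sphere 0 1 \<and> unit_cone A \<in> sets lebesgue}" "disjoint_family A"
    have "A i \<subseteq> sphere 0 1" for i
      using A(1) by auto
    then have "disjoint_family (\<lambda>i. unit_cone (A i))"
      using A(2) unfolding disjoint_family_on_def by (auto simp: unit_cone_eq) blast
    then have "(\<Sum>i. emeasure lebesgue (unit_cone (A i))) = emeasure lebesgue (\<Union>i. unit_cone (A i))"
      using A(1) by (intro suminf_emeasure) auto
    moreover have "unit_cone (\<Union>i. A i) = (\<Union>i. unit_cone (A i))"
      unfolding unit_cone_def by blast
    ultimately show "(\<Sum>i. ennreal (real DIM('a)) * emeasure lebesgue (unit_cone (A i))) =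
        ennreal (real DIM('a)) * emeasure lebesgue (unit_cone (\<Union>i. A i))"
      by (simp add: ennreal_suminf_cmult)
  qed
  have pos: "positive {A. A \<subseteq> sphere (0::'a) 1 \<and> unit_cone A \<in> sets lebesgue}
          (\<lambda>A. ennreal (real DIM('a)) * emeasure lebesgue (unit_cone A))"
    by (simp add: positive_def unit_cone_def)
  show ?thesis
    unfolding sphere_measure_def
    by (rule emeasure_measure_of_sigma[OF sigma_algebra_sphere_sets pos ca])
       (use assms in \<open>simp add: sets_sphere_measure\<close>)
qed

lemma Int_sphere_in_sets_sphere_measure:
  fixes B :: "'a::euclidean_space set"
  assumes "B \<in> sets borel"
  shows "B \<inter> sphere 0 1 \<in> sets sphere_measure"
  using unit_cone_Int_sphere_borel[OF assms] by (auto simp: sets_sphere_measure)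

lemma borel_measurable_continuous_on_sphere:
  fixes g :: "'a::euclidean_space \<Rightarrow> 'b::topological_space"
  assumes "continuous_on (sphere 0 1) g"
  shows "g \<in> borel_measurable sphere_measure"
proof (rule borel_measurableI)
  fix S :: "'b set" assume "open S"
  then obtain U where "open U" "U \<inter> sphere 0 1 = g -` S \<inter> sphere 0 1"
    using assms unfolding continuous_on_open_invariant by blast
  then show "g -` S \<inter> space sphere_measure \<in> sets sphere_measure"
    using Int_sphere_in_sets_sphere_measure[of U] by (simp add: space_sphere_measure)
qed

lemma finite_measure_sphere_measure: "finite_measure (sphere_measure :: 'a::euclidean_space measure)"
proof -
  have "sphere (0::'a) 1 \<in> sets sphere_measure"
    by (simp add: sets_sphere_measure unit_cone_sphere sets.Diff)
  then have "emeasure sphere_measure (sphere (0::'a) 1) =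
      ennreal (real DIM('a)) * emeasure lebesgue (cball (0::'a) 1 - {0})"
    by (simp add: emeasure_sphere_measure unit_cone_sphere)
  also have "\<dots> \<le> ennreal (real DIM('a)) * emeasure lebesgue (cball (0::'a) 1)"
    by (intro mult_left_mono emeasure_mono) auto
  also have "\<dots> < \<infinity>"
    using lmeasurable_cball[of "0::'a" 1] by (simp add: fmeasurable_def ennreal_mult_less_top)
  finally have "emeasure sphere_measure (sphere (0::'a) 1) \<noteq> \<infinity>"
    by (rule less_imp_neq)
  then show ?thesis
    by (intro finite_measureI) (simp add: space_sphere_measure)
qed

lemma null_sets_sphere_measureI:
  fixes N :: "'a::euclidean_space set"
  assumes "N \<subseteq> sphere 0 1" "negligible (unit_cone N)"
  shows "N \<in> null_sets sphere_measure"
proof -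
  have "unit_cone N \<in> null_sets lebesgue"
    using assms(2) negligible_iff_null_sets by blast
  then show ?thesis
    using assms(1) emeasure_sphere_measure[of N] by (auto simp: sets_sphere_measure null_sets_def)
qed

lemma integrable_continuous_on_sphere:
  fixes g :: "'a::euclidean_space \<Rightarrow> real"
  assumes "continuous_on (sphere 0 1) g"
  shows "integrable sphere_measure g"
proof -
  obtain B where "\<forall>u\<in>sphere 0 1. norm (g u) \<le> B"
    using compact_imp_bounded[OF compact_continuous_image[OF assms compact_sphere]]
    unfolding bounded_iff by blast
  then show ?thesis
    using borel_measurable_continuous_on_sphere[OF assms]
    by (intro finite_measure.integrable_const_bound[OF finite_measure_sphere_measure, of _ B])
       (auto simp: space_sphere_measure)
qed

section \<open>Wulff shapes\<close>

definition dual_density :: "real \<Rightarrow> real \<Rightarrow> 'a::euclidean_space set \<Rightarrow> 'a set \<Rightarrow> 'a \<Rightarrow> real" where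
  "dual_density q j M Q u = radial_fun M u powr q * radial_fun Q u powr (real DIM('a) - q - j)"

lemma dual_quermass_eq_integral:
  fixes M :: "'a::euclidean_space set"
  shows "dual_quermass q j M Q = (1 / real DIM('a)) * (\<integral>u. dual_density q j M Q u \<partial>sphere_measure)"
  unfolding dual_quermass_def dual_density_def ..

lemma dual_density_nonneg: "0 \<le> dual_density q j M Q u"
  by (simp add: dual_density_def)

locale wulff_generator =
  fixes \<Omega> :: "'a::euclidean_space set" and h :: "'a \<Rightarrow> real"
  assumes compact_Omega: "compact \<Omega>" and Omega_subset_sphere: "\<Omega> \<subseteq> sphere 0 1"
    and Omega_not_in_hemisphere: "\<forall>u\<in>sphere 0 1. \<not> \<Omega> \<subseteq> closed_hemisphere u"
    and continuous_h: "continuous_on \<Omega> h" and h_pos: "\<forall>v\<in>\<Omega>. h v > 0"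
begin

abbreviation W :: "'a set" where "W \<equiv> wulff_shape \<Omega> h"

definition gauge :: "'a \<Rightarrow> real" where
  "gauge u = Sup ((\<lambda>v. (u \<bullet> v) / h v) ` \<Omega>)"

definition maximizers :: "'a \<Rightarrow> 'a set" where
  "maximizers u = {v \<in> \<Omega>. (u \<bullet> v) / h v = gauge u}"

definition h_min :: real where
  "h_min = Inf (h ` \<Omega>)"

lemma Omega_nonempty: "\<Omega> \<noteq> {}"
proof -
  obtain b :: 'a where "b \<in> Basis"
    using nonempty_Basis by blast
  then have "b \<in> sphere 0 1" by simp
  with Omega_not_in_hemisphere show ?thesis by auto
qed

lemma continuous_on_ratio: "continuous_on \<Omega> (\<lambda>v. (u \<bullet> v) / h v)"
  using continuous_h h_pos by (intro continuous_intros) auto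

lemma maximizers_nonempty: "maximizers u \<noteq> {}"
  and ratio_le_gauge: "v \<in> \<Omega> \<Longrightarrow> (u \<bullet> v) / h v \<le> gauge u"
proof -
  obtain v0 where v0: "v0 \<in> \<Omega>" "\<forall>v\<in>\<Omega>. (u \<bullet> v) / h v \<le> (u \<bullet> v0) / h v0"
    using continuous_attains_sup[OF compact_Omega Omega_nonempty continuous_on_ratio] by blast
  have "gauge u = (u \<bullet> v0) / h v0"
    unfolding gauge_def by (rule cSup_eq_maximum) (use v0 in auto)
  with v0 show "maximizers u \<noteq> {}" "v \<in> \<Omega> \<Longrightarrow> (u \<bullet> v) / h v \<le> gauge u"
    by (auto simp: maximizers_def)
qed

lemma h_min_pos: "h_min > 0"
  and h_min_le: "v \<in> \<Omega> \<Longrightarrow> h_min \<le> h v"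
proof -
  obtain v0 where v0: "v0 \<in> \<Omega>" "\<forall>v\<in>\<Omega>. h v0 \<le> h v"
    using continuous_attains_inf[OF compact_Omega Omega_nonempty continuous_h] by blast
  have "h_min = h v0"
    unfolding h_min_def by (rule cInf_eq_minimum) (use v0 in auto)
  with v0 h_pos show "h_min > 0" "v \<in> \<Omega> \<Longrightarrow> h_min \<le> h v" by auto
qed

lemma gauge_pos: "u \<in> sphere 0 1 \<Longrightarrow> gauge u > 0"
proof -
  assume "u \<in> sphere 0 1"
  then have "\<not> \<Omega> \<subseteq> closed_hemisphere (- u)"
    using Omega_not_in_hemisphere by simp
  then obtain v where v: "v \<in> \<Omega>" "\<not> v \<bullet> (- u) \<ge> 0"
    using Omega_subset_sphere by (auto simp: closed_hemisphere_def)
  then have "(u \<bullet> v) / h v > 0"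
    using h_pos by (simp add: inner_commute)
  with ratio_le_gauge[OF v(1), of u] show ?thesis by linarith
qed

lemma ratio_diff_le:
  assumes "v \<in> \<Omega>"
  shows "\<bar>(u \<bullet> v) / h v - (u' \<bullet> v) / h v\<bar> \<le> norm (u - u') / h_min"
proof -
  have hv: "h v > 0" using h_pos assms by auto
  have "\<bar>(u \<bullet> v) / h v - (u' \<bullet> v) / h v\<bar> = \<bar>(u - u') \<bullet> v\<bar> / h v"
    using hv by (simp add: inner_diff_left diff_divide_distrib[symmetric] abs_divide)
  also have "\<dots> \<le> norm (u - u') / h v"
    using Cauchy_Schwarz_ineq2[of "u - u'" v] Omega_subset_sphere assms hv
    by (intro divide_right_mono) auto
  also have "\<dots> \<le> norm (u - u') / h_min"
    using h_min_pos h_min_le[OF assms] by (intro divide_left_mono) auto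
  finally show ?thesis .
qed

lemma lipschitz_on_gauge: "(1 / h_min)-lipschitz_on UNIV gauge"
proof (rule lipschitz_onI)
  have le: "gauge u \<le> gauge u' + norm (u - u') / h_min" for u u'
  proof -
    obtain v where v: "v \<in> maximizers u"
      using maximizers_nonempty by blast
    then have "v \<in> \<Omega>" "gauge u = (u \<bullet> v) / h v"
      by (auto simp: maximizers_def)
    with ratio_diff_le[of v u u'] ratio_le_gauge[of v u'] show ?thesis
      by linarith
  qed
  fix u u' :: 'a
  have "\<bar>gauge u - gauge u'\<bar> \<le> norm (u - u') / h_min"
    using le[of u u'] le[of u' u] unfolding norm_minus_commute[of u' u] abs_le_iff
    by (intro conjI) linarith+
  then show "dist (gauge u) (gauge u') \<le> 1 / h_min * dist u u'"
    by (simp add: dist_real_def dist_norm)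
qed (use h_min_pos in simp)

lemma continuous_on_gauge: "continuous_on A gauge"
  using lipschitz_on_continuous_on[OF lipschitz_on_gauge] continuous_on_subset by blast

lemma scaleR_mem_W_iff: "s \<ge> 0 \<Longrightarrow> s *\<^sub>R u \<in> W \<longleftrightarrow> s * gauge u \<le> 1"
proof -
  assume s: "s \<ge> 0"
  have "s *\<^sub>R u \<in> W \<longleftrightarrow> (\<forall>v\<in>\<Omega>. s * ((u \<bullet> v) / h v) \<le> 1)"
    unfolding wulff_shape_def using h_pos by (auto simp: field_simps)
  also have "\<dots> \<longleftrightarrow> s * gauge u \<le> 1"
  proof
    obtain v where "v \<in> maximizers u"
      using maximizers_nonempty by blast
    then have "v \<in> \<Omega>" "gauge u = (u \<bullet> v) / h v"
      by (auto simp: maximizers_def)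
    then show "\<forall>v\<in>\<Omega>. s * ((u \<bullet> v) / h v) \<le> 1 \<Longrightarrow> s * gauge u \<le> 1"
      by simp
    show "s * gauge u \<le> 1 \<Longrightarrow> \<forall>v\<in>\<Omega>. s * ((u \<bullet> v) / h v) \<le> 1"
      using ratio_le_gauge s by (meson mult_left_mono order_trans)
  qed
  finally show ?thesis .
qed

lemma radial_fun_W: "u \<in> sphere 0 1 \<Longrightarrow> radial_fun W u = 1 / gauge u"
proof -
  assume "u \<in> sphere 0 1"
  then have "gauge u > 0" by (rule gauge_pos)
  then have "{s. 0 \<le> s \<and> s *\<^sub>R u \<in> W} = {0 .. 1 / gauge u}"
    by (auto simp: scaleR_mem_W_iff field_simps)
  with \<open>gauge u > 0\<close> show ?thesis
    unfolding radial_fun_def by simp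
qed

lemma radial_fun_W_pos: "u \<in> sphere 0 1 \<Longrightarrow> radial_fun W u > 0"
  by (simp add: radial_fun_W gauge_pos)

lemma radial_point_in_W: "u \<in> sphere 0 1 \<Longrightarrow> radial_fun W u *\<^sub>R u \<in> W"
  using gauge_pos[of u] by (simp add: radial_fun_W scaleR_mem_W_iff)

lemma continuous_on_radial_fun_W: "continuous_on (sphere 0 1) (radial_fun W)"
proof -
  have "continuous_on (sphere 0 1) (\<lambda>u. 1 / gauge u)"
    using gauge_pos by (intro continuous_intros continuous_on_gauge) force
  then show ?thesis
    by (rule continuous_on_cong[THEN iffD1, rotated 2]) (auto simp: radial_fun_W)
qed

lemma cball_h_min_subset_W: "cball 0 h_min \<subseteq> W"
proof
  fix x :: 'a assume x: "x \<in> cball 0 h_min"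
  have "x \<bullet> v \<le> h v" if "v \<in> \<Omega>" for v
  proof -
    have "x \<bullet> v \<le> norm x * norm v" by (rule norm_cauchy_schwarz)
    also have "\<dots> \<le> h_min" using x that Omega_subset_sphere by auto
    finally show ?thesis using h_min_le[OF that] by linarith
  qed
  then show "x \<in> W" by (simp add: wulff_shape_def)
qed

lemma bounded_W: "bounded W"
proof -
  obtain u0 where u0: "u0 \<in> sphere 0 1" "\<forall>u\<in>sphere 0 1. gauge u0 \<le> gauge u"
    using continuous_attains_inf[OF compact_sphere _ continuous_on_gauge] Omega_nonempty
      Omega_subset_sphere by blast
  have "norm x \<le> 1 / gauge u0" if "x \<in> W" for x
  proof (cases "x = 0")
    case False
    have "norm x * gauge u0 \<le> norm x * gauge (x /\<^sub>R norm x)"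
      using u0(2) False by (intro mult_left_mono) auto
    also have "\<dots> \<le> 1"
      using scaleR_mem_W_iff[of "norm x" "x /\<^sub>R norm x"] that False by simp
    finally show ?thesis
      using gauge_pos[OF u0(1)] by (simp add: field_simps)
  qed (use gauge_pos[OF u0(1)] in simp)
  then show ?thesis
    unfolding bounded_iff by blast
qed

lemma inner_le_support_fun: "y \<in> W \<Longrightarrow> y \<bullet> v \<le> support_fun W v"
proof -
  assume "y \<in> W"
  obtain R where R: "\<forall>x\<in>W. norm x \<le> R"
    using bounded_W unfolding bounded_iff by blast
  have "bdd_above {x \<bullet> v |x. x \<in> W}"
    by (rule bdd_aboveI[of _ "R * norm v"])
       (use R norm_cauchy_schwarz in \<open>fastforce intro: order_trans mult_right_mono\<close>)
  then show ?thesis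
    unfolding support_fun_def by (rule cSup_upper[rotated]) (use \<open>y \<in> W\<close> in auto)
qed

lemma support_fun_le_h: "v \<in> \<Omega> \<Longrightarrow> support_fun W v \<le> h v"
  unfolding support_fun_def
proof (rule cSup_least)
  show "{x \<bullet> v |x. x \<in> W} \<noteq> {}"
    using cball_h_min_subset_W h_min_pos by auto
qed (auto simp: wulff_shape_def)

lemma support_fun_ge_h_min: "v \<in> sphere 0 1 \<Longrightarrow> h_min \<le> support_fun W v"
proof -
  assume v: "v \<in> sphere 0 1"
  have "h_min *\<^sub>R v \<in> W"
    using cball_h_min_subset_W v h_min_pos by (auto simp: subset_iff)
  then have "(h_min *\<^sub>R v) \<bullet> v \<le> support_fun W v"
    by (rule inner_le_support_fun)
  with v show ?thesis
    by (simp add: dot_square_norm)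
qed

definition normals :: "'a \<Rightarrow> 'a set" where
  "normals u = {v \<in> sphere 0 1. radial_fun W u * (u \<bullet> v) = support_fun W v}"

definition singular_directions :: "'a set" where
  "singular_directions = {u \<in> sphere 0 1. \<exists>v1\<in>normals u. \<exists>v2\<in>normals u. v1 \<noteq> v2}"

definition gauss_map :: "'a \<Rightarrow> 'a" where
  "gauss_map u = (SOME v. v \<in> maximizers u)"

lemma maximizers_subset_normals: "u \<in> sphere 0 1 \<Longrightarrow> maximizers u \<subseteq> normals u"
proof
  fix v assume u: "u \<in> sphere 0 1" and "v \<in> maximizers u"
  then have v: "v \<in> \<Omega>" "(u \<bullet> v) / h v = gauge u"
    by (auto simp: maximizers_def)
  moreover have "h v > 0"
    using h_pos v(1) by blast
  ultimately have "radial_fun W u * (u \<bullet> v) = h v"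
    using gauge_pos[OF u] by (simp add: radial_fun_W[OF u] field_simps)
  moreover have "(radial_fun W u *\<^sub>R u) \<bullet> v \<le> support_fun W v"
    by (rule inner_le_support_fun[OF radial_point_in_W[OF u]])
  ultimately show "v \<in> normals u"
    using support_fun_le_h[OF v(1)] v(1) Omega_subset_sphere by (auto simp: normals_def)
qed

lemma support_fun_W_pos: "v \<in> sphere 0 1 \<Longrightarrow> support_fun W v > 0"
  using support_fun_ge_h_min h_min_pos by (meson less_le_trans)

lemma inj_on_scaleR_inverse_support_fun: "inj_on (\<lambda>v. v /\<^sub>R support_fun W v) (sphere 0 1)"
proof (rule inj_onI)
  fix v1 v2 :: 'a
  assume s: "v1 \<in> sphere 0 1" "v2 \<in> sphere 0 1" and e: "v1 /\<^sub>R support_fun W v1 = v2 /\<^sub>R support_fun W v2"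
  note pos = support_fun_W_pos[OF s(1)] support_fun_W_pos[OF s(2)]
  from arg_cong[OF e, of norm] s pos have "support_fun W v1 = support_fun W v2"
    by simp
  with e pos show "v1 = v2"
    by simp
qed

lemma scaleR_singular_direction_in_multiple_argmax:
  assumes "u \<in> singular_directions" "r > 0"
  shows "r *\<^sub>R u \<in> multiple_argmax ((\<lambda>v. v /\<^sub>R support_fun W v) ` sphere 0 1)"
    (is "?x \<in> multiple_argmax ?P")
proof -
  obtain v1 v2 where u: "u \<in> sphere 0 1" and v: "v1 \<in> normals u" "v2 \<in> normals u" "v1 \<noteq> v2"
    using assms(1) unfolding singular_directions_def by blast
  have \<rho>: "radial_fun W u > 0"
    using radial_fun_W_pos[OF u] .
  have x_inner: "?x \<bullet> (v /\<^sub>R support_fun W v)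
      = r / radial_fun W u * (radial_fun W u * (u \<bullet> v) / support_fun W v)" for v
    using \<rho> by (simp add: divide_inverse ac_simps)
  have le: "?x \<bullet> p \<le> r / radial_fun W u" if "p \<in> ?P" for p
  proof -
    obtain v where v: "v \<in> sphere 0 1" "p = v /\<^sub>R support_fun W v"
      using \<open>p \<in> ?P\<close> by blast
    have "(radial_fun W u *\<^sub>R u) \<bullet> v \<le> support_fun W v"
      by (rule inner_le_support_fun[OF radial_point_in_W[OF u]])
    then have "radial_fun W u * (u \<bullet> v) / support_fun W v \<le> 1"
      using support_fun_W_pos[OF v(1)] by (simp add: divide_le_eq)
    then show ?thesis
      unfolding v(2) x_inner using \<rho> assms(2) by (intro mult_left_le) auto
  qed
  have eq: "?x \<bullet> (v /\<^sub>R support_fun W v) = r / radial_fun W u" if "v \<in> normals u" for v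
  proof -
    have "v \<in> sphere 0 1" "radial_fun W u * (u \<bullet> v) = support_fun W v"
      using that by (auto simp: normals_def)
    with support_fun_W_pos[of v] show ?thesis
      unfolding x_inner by simp
  qed
  have "v1 \<in> sphere 0 1" "v2 \<in> sphere 0 1"
    using v by (auto simp: normals_def)
  then have neq: "v1 /\<^sub>R support_fun W v1 \<noteq> v2 /\<^sub>R support_fun W v2"
    by (rule inj_on_contraD[OF inj_on_scaleR_inverse_support_fun v(3)])
  have inP: "v /\<^sub>R support_fun W v \<in> ?P" if "v \<in> normals u" for v
    using that by (auto simp: normals_def)
  have "\<forall>p\<in>?P. ?x \<bullet> p \<le> ?x \<bullet> (v1 /\<^sub>R support_fun W v1) \<and> ?x \<bullet> p \<le> ?x \<bullet> (v2 /\<^sub>R support_fun W v2)"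
    using le eq[OF v(1)] eq[OF v(2)] by simp
  with inP[OF v(1)] inP[OF v(2)] neq show ?thesis
    unfolding multiple_argmax_def by blast
qed

lemma negligible_unit_cone_singular_directions: "negligible (unit_cone singular_directions)"
proof -
  have "unit_cone singular_directions \<subseteq> multiple_argmax ((\<lambda>v. v /\<^sub>R support_fun W v) ` sphere 0 1)"
    using scaleR_singular_direction_in_multiple_argmax by (auto simp: unit_cone_def)
  then show ?thesis
    using negligible_multiple_argmax negligible_subset by blast
qed

lemma gauss_map_in_maximizers: "gauss_map u \<in> maximizers u"
  unfolding gauss_map_def using maximizers_nonempty[of u] by (simp add: some_in_eq)

lemma gauss_map_in_Omega: "gauss_map u \<in> \<Omega>"
  using gauss_map_in_maximizers by (simp add: maximizers_def)

lemma normals_eq_gauss_map: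
  assumes "u \<in> sphere 0 1" "u \<notin> singular_directions"
  shows "normals u = {gauss_map u}" and "maximizers u = {gauss_map u}"
  using assms maximizers_subset_normals[of u] gauss_map_in_maximizers[of u]
  unfolding singular_directions_def by blast+

lemma ratio_less_unique_maximizer:
  assumes "maximizers u = {a}" "v \<in> \<Omega>" "v \<noteq> a"
  shows "(u \<bullet> v) / h v < (u \<bullet> a) / h a"
proof -
  have "v \<notin> maximizers u"
    using assms(1,3) by blast
  then have "(u \<bullet> v) / h v \<noteq> gauge u"
    using assms(2) by (simp add: maximizers_def)
  moreover have "(u \<bullet> a) / h a = gauge u"
    using assms(1) by (auto simp: maximizers_def)
  ultimately show ?thesis
    using ratio_le_gauge[OF assms(2), of u] by linarith
qed

lemma continuous_on_gauss_map: "continuous_on (sphere 0 1 - singular_directions) gauss_map"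
  unfolding continuous_on_def
proof
  fix u assume u: "u \<in> sphere 0 1 - singular_directions"
  let ?F = "at u within (sphere 0 1 - singular_directions)"
  have max: "maximizers u = {gauss_map u}"
    using normals_eq_gauss_map u by blast
  have gauge_eq: "(u' \<bullet> gauss_map u') / h (gauss_map u') = gauge u'" for u'
    using gauss_map_in_maximizers[of u'] by (simp add: maximizers_def)
  have "((\<lambda>u'. (u \<bullet> gauss_map u') / h (gauss_map u') - gauge u') \<longlongrightarrow> 0) ?F"
  proof (rule Lim_null_comparison)
    have "norm ((u \<bullet> gauss_map u') / h (gauss_map u') - gauge u') \<le> norm (u - u') / h_min" for u'
    proof -
      have "\<bar>(u \<bullet> gauss_map u') / h (gauss_map u') - (u' \<bullet> gauss_map u') / h (gauss_map u')\<bar>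
          \<le> norm (u - u') / h_min"
        by (rule ratio_diff_le[OF gauss_map_in_Omega])
      then show ?thesis
        using gauge_eq[of u'] by simp
    qed
    then show "\<forall>\<^sub>F u' in ?F. norm ((u \<bullet> gauss_map u') / h (gauss_map u') - gauge u') \<le> norm (u - u') / h_min"
      by (intro always_eventually) blast
    show "((\<lambda>u'. norm (u - u') / h_min) \<longlongrightarrow> 0) ?F"
      using h_min_pos by (intro tendsto_eq_intros) auto
  qed
  moreover have "(gauge \<longlongrightarrow> gauge u) ?F"
    using continuous_on_gauge[of "sphere 0 1 - singular_directions"] u
    unfolding continuous_on_def by blast
  ultimately have "((\<lambda>u'. ((u \<bullet> gauss_map u') / h (gauss_map u') - gauge u') + gauge u')
      \<longlongrightarrow> 0 + gauge u) ?F"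
    by (rule tendsto_add)
  then have lim: "((\<lambda>u'. (u \<bullet> gauss_map u') / h (gauss_map u'))
      \<longlongrightarrow> (u \<bullet> gauss_map u) / h (gauss_map u)) ?F"
    by (simp add: gauge_eq)
  show "(gauss_map \<longlongrightarrow> gauss_map u) ?F"
    by (rule tendsto_unique_maximizer[OF compact_Omega continuous_on_ratio gauss_map_in_Omega
          ratio_less_unique_maximizer[OF max]
          always_eventually[OF allI[OF gauss_map_in_Omega]] lim])
qed

lemma subset_singular_directions_null: "N \<subseteq> singular_directions \<Longrightarrow> N \<in> null_sets sphere_measure"
  using negligible_unit_cone_singular_directions
  by (intro null_sets_sphere_measureI) (auto simp: singular_directions_def
      intro: negligible_subset[OF _ unit_cone_mono])

lemma gauss_map_measurable: "gauss_map \<in> sphere_measure \<rightarrow>\<^sub>M restrict_space borel (sphere 0 1)"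
proof -
  have "gauss_map \<in> borel_measurable sphere_measure"
  proof (rule borel_measurableI)
    fix S :: "'a set" assume "open S"
    then obtain U where U: "open U"
        "U \<inter> (sphere 0 1 - singular_directions) = gauss_map -` S \<inter> (sphere 0 1 - singular_directions)"
      using continuous_on_gauss_map unfolding continuous_on_open_invariant by blast
    then have "gauss_map -` S \<inter> space sphere_measure =
        (U \<inter> sphere 0 1 - singular_directions) \<union> (gauss_map -` S \<inter> singular_directions)"
      by (auto simp: space_sphere_measure singular_directions_def)
    moreover have "U \<inter> sphere 0 1 \<in> sets sphere_measure"
      using U(1) by (intro Int_sphere_in_sets_sphere_measure) auto
    moreover have "singular_directions \<in> sets sphere_measure"
      "gauss_map -` S \<inter> singular_directions \<in> sets sphere_measure"
      using subset_singular_directions_null by auto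
    ultimately show "gauss_map -` S \<inter> space sphere_measure \<in> sets sphere_measure"
      by auto
  qed
  then show ?thesis
    using gauss_map_in_Omega Omega_subset_sphere
    by (auto simp: measurable_restrict_space2_iff space_sphere_measure)
qed

lemma borel_measurable_comp_gauss_map:
  fixes g :: "'a \<Rightarrow> real"
  assumes "continuous_on \<Omega> g"
  shows "(\<lambda>u. g (gauss_map u)) \<in> borel_measurable sphere_measure"
proof -
  have "(\<lambda>v. indicator \<Omega> v *\<^sub>R g v) \<in> borel_measurable (restrict_space borel (sphere 0 1))"
    using borel_measurable_continuous_on_indicator[OF borel_compact[OF compact_Omega] assms]
    by (rule measurable_restrict_space1)
  then have "(\<lambda>u. indicator \<Omega> (gauss_map u) *\<^sub>R g (gauss_map u)) \<in> borel_measurable sphere_measure"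
    by (rule measurable_compose[OF gauss_map_measurable])
  then show ?thesis
    using gauss_map_in_Omega by simp
qed

lemma radial_gauss_image_star_iff:
  assumes "u \<in> sphere 0 1 - singular_directions" "\<eta> \<subseteq> sphere 0 1"
  shows "u \<in> radial_gauss_image_star W \<eta> \<longleftrightarrow> gauss_map u \<in> \<eta>"
proof -
  have "u \<in> radial_gauss_image_star W \<eta> \<longleftrightarrow> (\<exists>v\<in>\<eta>. v \<in> normals u)"
    using assms unfolding radial_gauss_image_star_def normals_def by blast
  also have "\<dots> \<longleftrightarrow> gauss_map u \<in> \<eta>"
    using normals_eq_gauss_map(1)[of u] assms(1) by auto
  finally show ?thesis .
qed

lemma continuous_on_dual_density:
  assumes "star_body_o Q"
  shows "continuous_on (sphere 0 1) (dual_density q j W Q)"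
  using assms continuous_on_radial_fun_W radial_fun_W_pos
  unfolding dual_density_def star_body_o_def
  by (intro continuous_intros) force+

lemma emeasure_dual_curv_measure:
  assumes Q: "star_body_o Q" and \<eta>: "\<eta> \<in> sets (restrict_space borel (sphere 0 1))"
  shows "ennreal (1 / real DIM('a)) *
        (\<integral>\<^sup>+u\<in>radial_gauss_image_star W \<eta>. ennreal (dual_density q j W Q u) \<partial>sphere_measure)
      = emeasure (distr (density sphere_measure (\<lambda>u. ennreal (dual_density q j W Q u / real DIM('a))))
          (restrict_space borel (sphere 0 1)) gauss_map) \<eta>"
proof -
  let ?g = "dual_density q j W Q"
  let ?E = "gauss_map -` \<eta> \<inter> space sphere_measure"
  have \<eta>_sphere: "\<eta> \<subseteq> sphere 0 1"
    using sets.sets_into_space[OF \<eta>] by (simp add: space_restrict_space)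
  have g: "?g \<in> borel_measurable sphere_measure"
    by (rule borel_measurable_continuous_on_sphere[OF continuous_on_dual_density[OF Q]])
  have E: "?E \<in> sets sphere_measure"
    by (rule measurable_sets[OF gauss_map_measurable \<eta>])
  have "AE u in sphere_measure. u \<notin> singular_directions"
    using subset_singular_directions_null by (intro AE_not_in) simp
  moreover have "AE u in sphere_measure. u \<in> sphere 0 1"
    by (rule AE_I2) (simp add: space_sphere_measure)
  ultimately have "AE u in sphere_measure. ennreal (?g u) * indicator (radial_gauss_image_star W \<eta>) u
      = ennreal (?g u) * indicator ?E u"
    by eventually_elim
       (auto simp: space_sphere_measure radial_gauss_image_star_iff[OF _ \<eta>_sphere] indicator_def)
  then have "(\<integral>\<^sup>+u\<in>radial_gauss_image_star W \<eta>. ennreal (?g u) \<partial>sphere_measure)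
      = (\<integral>\<^sup>+u. ennreal (?g u) * indicator ?E u \<partial>sphere_measure)"
    by (rule nn_integral_cong_AE)
  also have "ennreal (1 / real DIM('a)) * \<dots> =
      (\<integral>\<^sup>+u. ennreal (1 / real DIM('a)) * (ennreal (?g u) * indicator ?E u) \<partial>sphere_measure)"
    by (rule nn_integral_cmult[symmetric]) (use g E in measurable)
  also have "\<dots> = (\<integral>\<^sup>+u. ennreal (?g u / real DIM('a)) * indicator ?E u \<partial>sphere_measure)"
    by (intro nn_integral_cong)
       (simp add: dual_density_nonneg ennreal_mult[symmetric] mult.assoc[symmetric])
  also have "\<dots> = emeasure (density sphere_measure (\<lambda>u. ennreal (?g u / real DIM('a)))) ?E"
    using g E by (intro emeasure_density[symmetric]) auto
  also have "\<dots> = emeasure (distr (density sphere_measure (\<lambda>u. ennreal (?g u / real DIM('a))))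
      (restrict_space borel (sphere 0 1)) gauss_map) \<eta>"
    using gauss_map_measurable \<eta> by (simp add: emeasure_distr)
  finally show ?thesis .
qed

lemma dual_curv_measure_eq_distr:
  assumes Q: "star_body_o Q"
  shows "dual_curv_measure q j W Q =
    distr (density sphere_measure (\<lambda>u. ennreal (dual_density q j W Q u / real DIM('a))))
      (restrict_space borel (sphere 0 1)) gauss_map"
    (is "_ = ?\<nu>")
proof -
  have sets: "sets ?\<nu> = sets (restrict_space borel (sphere (0::'a) 1))" "space ?\<nu> = sphere 0 1"
    by (simp_all add: space_restrict_space)
  have "dual_curv_measure q j W Q = measure_of (sphere 0 1) (sets ?\<nu>) (emeasure ?\<nu>)"
    unfolding dual_curv_measure_def sets(1)
  proof (rule measure_of_eq)
    show "sets (restrict_space borel (sphere (0::'a) 1)) \<subseteq> Pow (sphere 0 1)"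
      using sets.space_closed[of "restrict_space borel (sphere (0::'a) 1)"]
      by (simp add: space_restrict_space)
    fix \<eta> assume "\<eta> \<in> sigma_sets (sphere 0 1) (sets (restrict_space borel (sphere (0::'a) 1)))"
    then have "\<eta> \<in> sets (restrict_space borel (sphere (0::'a) 1))"
      using sets.sigma_sets_eq[of "restrict_space borel (sphere (0::'a) 1)"]
      by (simp add: space_restrict_space)
    from emeasure_dual_curv_measure[OF Q this, of q j] show "ennreal (1 / real DIM('a)) *
        (\<integral>\<^sup>+u\<in>radial_gauss_image_star W \<eta>.
            ennreal (radial_fun W u powr q * radial_fun Q u powr (real DIM('a) - q - j)) \<partial>sphere_measure)
      = emeasure ?\<nu> \<eta>"
      by (simp add: dual_density_def)
  qed
  also have "\<dots> = ?\<nu>"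
    using measure_of_of_measure[of ?\<nu>] sets(2) by simp
  finally show ?thesis .
qed

lemma integral_dual_curv_measure:
  fixes g :: "'a \<Rightarrow> real"
  assumes Q: "star_body_o Q" and g: "continuous_on \<Omega> g"
  shows "(\<integral>v\<in>\<Omega>. g v \<partial>dual_curv_measure q j W Q) =
    (1 / real DIM('a)) * (\<integral>u. dual_density q j W Q u * g (gauss_map u) \<partial>sphere_measure)"
proof -
  let ?d = "\<lambda>u. dual_density q j W Q u / real DIM('a)"
  have d: "?d \<in> borel_measurable sphere_measure"
    using borel_measurable_continuous_on_sphere[OF continuous_on_dual_density[OF Q]] by measurable
  have gi: "(\<lambda>v. indicator \<Omega> v *\<^sub>R g v) \<in> borel_measurable (restrict_space borel (sphere 0 1))"
    using borel_measurable_continuous_on_indicator[OF borel_compact[OF compact_Omega] g]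
    by (rule measurable_restrict_space1)
  have "(\<integral>v\<in>\<Omega>. g v \<partial>dual_curv_measure q j W Q)
      = (\<integral>u. indicator \<Omega> (gauss_map u) *\<^sub>R g (gauss_map u) \<partial>density sphere_measure (\<lambda>u. ennreal (?d u)))"
    unfolding set_lebesgue_integral_def dual_curv_measure_eq_distr[OF Q]
    using gauss_map_measurable by (intro integral_distr gi) simp
  also have "\<dots> = (\<integral>u. ?d u *\<^sub>R (indicator \<Omega> (gauss_map u) *\<^sub>R g (gauss_map u)) \<partial>sphere_measure)"
    using d gauss_map_measurable gi
    by (intro integral_density) (auto simp: dual_density_nonneg)
  also have "\<dots> = (1 / real DIM('a)) * (\<integral>u. dual_density q j W Q u * g (gauss_map u) \<partial>sphere_measure)"
    using gauss_map_in_Omega by (simp add: integral_mult_right_zero[symmetric] mult_ac)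
  finally show ?thesis .
qed

end

lemma
  assumes "wulff_generator \<Omega> h" "wulff_generator \<Omega> h'" "u \<in> sphere 0 1"
  shows gauge_mult_le_gauge:
      "a \<in> wulff_generator.maximizers \<Omega> h u \<Longrightarrow>
        wulff_generator.gauge \<Omega> h u * (h a / h' a) \<le> wulff_generator.gauge \<Omega> h' u"
    and ratio_eq_gauge_mult:
      "b \<in> wulff_generator.maximizers \<Omega> h' u \<Longrightarrow>
        (u \<bullet> b) / h b = wulff_generator.gauge \<Omega> h' u * (h' b / h b)"
proof -
  interpret W: wulff_generator \<Omega> h by fact
  interpret W': wulff_generator \<Omega> h' by fact
  show "W.gauge u * (h a / h' a) \<le> W'.gauge u" if "a \<in> W.maximizers u"
  proof -
    have "a \<in> \<Omega>" "W.gauge u = (u \<bullet> a) / h a"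
      using that by (auto simp: W.maximizers_def)
    moreover have "h a > 0"
      using W.h_pos \<open>a \<in> \<Omega>\<close> by blast
    ultimately have "W.gauge u * (h a / h' a) = (u \<bullet> a) / h' a"
      by simp
    with W'.ratio_le_gauge[OF \<open>a \<in> \<Omega>\<close>, of u] show ?thesis
      by linarith
  qed
  show "(u \<bullet> b) / h b = W'.gauge u * (h' b / h b)" if "b \<in> W'.maximizers u"
  proof -
    have "b \<in> \<Omega>" "W'.gauge u = (u \<bullet> b) / h' b"
      using that by (auto simp: W'.maximizers_def)
    moreover have "h' b > 0"
      using W'.h_pos \<open>b \<in> \<Omega>\<close> by blast
    ultimately show ?thesis
      by simp
  qed
qed

section \<open>Logarithmic families of Wulff shapes\<close>

locale log_wulff_family =
  fixes \<Omega> :: "'a::euclidean_space set" and h :: "real \<Rightarrow> 'a \<Rightarrow> real" and f :: "'a \<Rightarrow> real"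
    and \<delta> :: real and e :: "real \<Rightarrow> 'a \<Rightarrow> real"
  assumes compact_Omega: "compact \<Omega>" and Omega_subset_sphere: "\<Omega> \<subseteq> sphere 0 1"
    and Omega_not_in_hemisphere: "\<forall>u\<in>sphere 0 1. \<not> \<Omega> \<subseteq> closed_hemisphere u"
    and continuous_f: "continuous_on \<Omega> f" and delta_pos: "\<delta> > 0"
    and family: "\<And>t. \<bar>t\<bar> < \<delta> \<Longrightarrow> continuous_on \<Omega> (h t) \<and> (\<forall>v\<in>\<Omega>. h t v > 0)
        \<and> (\<forall>v\<in>\<Omega>. ln (h t v) = ln (h 0 v) + t * f v + e t v)"
    and remainder: "uniform_limit \<Omega> (\<lambda>t v. e t v / t) (\<lambda>v. 0) (at 0)"
begin

abbreviation gauge_at :: "real \<Rightarrow> 'a \<Rightarrow> real" where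
  "gauge_at t \<equiv> wulff_generator.gauge \<Omega> (h t)"

abbreviation gauss_map_at :: "real \<Rightarrow> 'a \<Rightarrow> 'a" where
  "gauss_map_at t \<equiv> wulff_generator.gauss_map \<Omega> (h t)"

definition log_increment :: "real \<Rightarrow> 'a \<Rightarrow> real" where
  "log_increment t v = ln (h t v) - ln (h 0 v)"

lemma wulff_generator_at: "\<bar>t\<bar> < \<delta> \<Longrightarrow> wulff_generator \<Omega> (h t)"
  using family[of t] compact_Omega Omega_subset_sphere Omega_not_in_hemisphere
  by unfold_locales auto

sublocale W0: wulff_generator \<Omega> "h 0"
  using wulff_generator_at delta_pos by simp

lemma eventually_nhds_abs_less_delta: "\<forall>\<^sub>F t in nhds 0. \<bar>t\<bar> < \<delta>"
  unfolding eventually_nhds_metric using delta_pos by (auto simp: dist_real_def)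

lemma eventually_abs_less_delta: "\<forall>\<^sub>F t in at 0. \<bar>t\<bar> < \<delta>"
  using eventually_nhds_abs_less_delta eventually_nhds_conv_at by blast

lemma log_increment_eq: "\<bar>t\<bar> < \<delta> \<Longrightarrow> v \<in> \<Omega> \<Longrightarrow> log_increment t v = t * f v + e t v"
  using family[of t] by (simp add: log_increment_def)

lemma eventually_remainder_small: "\<epsilon> > 0 \<Longrightarrow> \<forall>\<^sub>F t in at 0. \<forall>v\<in>\<Omega>. \<bar>e t v / t\<bar> < \<epsilon>"
  using remainder unfolding uniform_limit_iff by (simp add: dist_real_def)

lemma eventually_abs_log_increment_le: "\<exists>C\<ge>0. \<forall>\<^sub>F t in at 0. \<forall>v\<in>\<Omega>. \<bar>log_increment t v\<bar> \<le> C * \<bar>t\<bar>"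
proof -
  obtain F where F: "\<forall>v\<in>\<Omega>. \<bar>f v\<bar> \<le> F"
    using compact_imp_bounded[OF compact_continuous_image[OF continuous_f compact_Omega]]
    unfolding bounded_iff by auto
  have "\<forall>\<^sub>F t in at 0. \<forall>v\<in>\<Omega>. \<bar>log_increment t v\<bar> \<le> (\<bar>F\<bar> + 1) * \<bar>t\<bar>"
    using eventually_abs_less_delta eventually_remainder_small[OF zero_less_one] eventually_neq_at_within[of 0 0 UNIV]
  proof eventually_elim
    case (elim t)
    show ?case
    proof
      fix v assume v: "v \<in> \<Omega>"
      have "\<bar>e t v\<bar> = \<bar>t\<bar> * \<bar>e t v / t\<bar>"
        using elim(3) by simp
      also have "\<dots> \<le> \<bar>t\<bar>"
        using elim(2) v less_imp_le by (intro mult_left_le) auto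
      finally have "\<bar>e t v\<bar> \<le> \<bar>t\<bar>" .
      moreover have "\<bar>t * f v\<bar> \<le> \<bar>t\<bar> * \<bar>F\<bar>"
        using F v by (auto simp: abs_mult intro!: mult_left_mono)
      ultimately show "\<bar>log_increment t v\<bar> \<le> (\<bar>F\<bar> + 1) * \<bar>t\<bar>"
        using log_increment_eq[OF elim(1) v] abs_triangle_ineq[of "t * f v" "e t v"]
        by (simp add: algebra_simps)
    qed
  qed
  then show ?thesis
    by (intro exI[of _ "\<bar>F\<bar> + 1"]) simp
qed

lemma tendsto_log_increment_quotient:
  assumes x: "\<forall>\<^sub>F t in at 0. x t \<in> \<Omega>" "(x \<longlongrightarrow> a) (at 0)" and a: "a \<in> \<Omega>"
  shows "((\<lambda>t. log_increment t (x t) / t) \<longlongrightarrow> f a) (at 0)"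
proof -
  have "((\<lambda>t. e t (x t) / t) \<longlongrightarrow> 0) (at 0)"
  proof (rule tendstoI)
    fix \<epsilon> :: real assume "\<epsilon> > 0"
    show "\<forall>\<^sub>F t in at 0. dist (e t (x t) / t) 0 < \<epsilon>"
      using x(1) eventually_remainder_small[OF \<open>\<epsilon> > 0\<close>] by eventually_elim simp
  qed
  with continuous_on_tendsto_compose[OF continuous_f x(2) a x(1)]
  have "((\<lambda>t. f (x t) + e t (x t) / t) \<longlongrightarrow> f a + 0) (at 0)"
    by (rule tendsto_add)
  moreover have "\<forall>\<^sub>F t in at 0. f (x t) + e t (x t) / t = log_increment t (x t) / t"
    using x(1) eventually_abs_less_delta eventually_neq_at_within[of 0 0 UNIV]
    by eventually_elim (simp add: log_increment_eq add_divide_distrib)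
  ultimately show ?thesis
    by (simp add: Lim_transform_eventually)
qed

lemma
  assumes t: "\<bar>t\<bar> < \<delta>" and u: "u \<in> sphere 0 1" and a: "a \<in> W0.maximizers u"
  shows log_increment_gauss_map_at_le:
      "log_increment t (gauss_map_at t u) \<le> ln (W0.gauge u) - ln (gauge_at t u)"
    and ln_gauge_diff_le_log_increment:
      "ln (W0.gauge u) - ln (gauge_at t u) \<le> log_increment t a"
    and ratio_gauss_map_at_ge:
      "W0.gauge u * exp (log_increment t (gauss_map_at t u) - log_increment t a)
        \<le> (u \<bullet> gauss_map_at t u) / h 0 (gauss_map_at t u)"
proof -
  interpret Wt: wulff_generator \<Omega> "h t"
    by (rule wulff_generator_at[OF t])
  let ?b = "Wt.gauss_map u"
  have "a \<in> \<Omega>"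
    using a by (simp add: W0.maximizers_def)
  then have h_a: "h 0 a / h t a = exp (- log_increment t a)"
    using W0.h_pos Wt.h_pos by (simp add: log_increment_def exp_diff)
  have h_b: "h t ?b / h 0 ?b = exp (log_increment t ?b)"
    using W0.h_pos Wt.h_pos Wt.gauss_map_in_Omega by (simp add: log_increment_def exp_diff)
  have g0: "W0.gauge u > 0" and gt: "Wt.gauge u > 0"
    using u by (simp_all add: W0.gauge_pos Wt.gauge_pos)
  have lower: "W0.gauge u * exp (- log_increment t a) \<le> Wt.gauge u"
    using gauge_mult_le_gauge[OF W0.wulff_generator_axioms Wt.wulff_generator_axioms u a] h_a by simp
  have ratio_b: "(u \<bullet> ?b) / h 0 ?b = Wt.gauge u * exp (log_increment t ?b)"
    using ratio_eq_gauge_mult[OF W0.wulff_generator_axioms Wt.wulff_generator_axioms u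
        Wt.gauss_map_in_maximizers] h_b by simp
  have upper: "Wt.gauge u * exp (log_increment t ?b) \<le> W0.gauge u"
    using W0.ratio_le_gauge[OF Wt.gauss_map_in_Omega[of u], of u] ratio_b by simp
  show "log_increment t ?b \<le> ln (W0.gauge u) - ln (Wt.gauge u)"
    using ln_le_cancel_iff[THEN iffD2, OF _ _ upper] g0 gt by (simp add: ln_mult)
  show "ln (W0.gauge u) - ln (Wt.gauge u) \<le> log_increment t a"
    using ln_le_cancel_iff[THEN iffD2, OF _ _ lower] g0 gt by (simp add: ln_mult)
  have "W0.gauge u * exp (log_increment t ?b - log_increment t a)
      = W0.gauge u * exp (- log_increment t a) * exp (log_increment t ?b)"
    by (simp add: exp_diff exp_minus field_simps)
  also have "\<dots> \<le> Wt.gauge u * exp (log_increment t ?b)"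
    using lower by (intro mult_right_mono) auto
  finally show "W0.gauge u * exp (log_increment t ?b - log_increment t a) \<le> (u \<bullet> ?b) / h 0 ?b"
    using ratio_b by simp
qed

lemma gauss_map_at_in_Omega: "\<bar>t\<bar> < \<delta> \<Longrightarrow> gauss_map_at t u \<in> \<Omega>"
  using wulff_generator.gauss_map_in_Omega[OF wulff_generator_at] .

lemma eventually_gauss_map_at_in_Omega: "\<forall>\<^sub>F t in at 0. gauss_map_at t u \<in> \<Omega>"
  using eventually_abs_less_delta by eventually_elim (rule gauss_map_at_in_Omega)

lemma tendsto_gauss_map_at:
  assumes u: "u \<in> sphere 0 1" and a: "W0.maximizers u = {a}"
  shows "((\<lambda>t. gauss_map_at t u) \<longlongrightarrow> a) (at 0)"
proof -
  have a_max: "a \<in> W0.maximizers u"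
    using a by simp
  then have "a \<in> \<Omega>" and gauge_a: "(u \<bullet> a) / h 0 a = W0.gauge u"
    by (auto simp: W0.maximizers_def)
  obtain C where C: "\<forall>\<^sub>F t in at 0. \<forall>v\<in>\<Omega>. \<bar>log_increment t v\<bar> \<le> C * \<bar>t\<bar>"
    using eventually_abs_log_increment_le by blast
  let ?r = "\<lambda>t. (u \<bullet> gauss_map_at t u) / h 0 (gauss_map_at t u)"
  have "(?r \<longlongrightarrow> W0.gauge u) (at 0)"
  proof (rule tendsto_sandwich)
    show "\<forall>\<^sub>F t in at 0. W0.gauge u * exp (- (2 * C * \<bar>t\<bar>)) \<le> ?r t"
      using C eventually_abs_less_delta
    proof eventually_elim
      case (elim t)
      have "\<bar>log_increment t (gauss_map_at t u)\<bar> \<le> C * \<bar>t\<bar>" "\<bar>log_increment t a\<bar> \<le> C * \<bar>t\<bar>"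
        using elim(1) gauss_map_at_in_Omega[OF elim(2)] \<open>a \<in> \<Omega>\<close> by blast+
      then have "W0.gauge u * exp (- (2 * C * \<bar>t\<bar>))
          \<le> W0.gauge u * exp (log_increment t (gauss_map_at t u) - log_increment t a)"
        using W0.gauge_pos[OF u] by (intro mult_left_mono) auto
      also have "\<dots> \<le> ?r t"
        by (rule ratio_gauss_map_at_ge[OF elim(2) u a_max])
      finally show ?case .
    qed
    show "\<forall>\<^sub>F t in at 0. ?r t \<le> W0.gauge u"
      using eventually_abs_less_delta
      by eventually_elim (rule W0.ratio_le_gauge[OF gauss_map_at_in_Omega])
    have "((\<lambda>t. W0.gauge u * exp (- (2 * C * \<bar>t\<bar>))) \<longlongrightarrow> W0.gauge u * exp (- (2 * C * \<bar>0\<bar>))) (at 0)"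
      by (intro tendsto_intros)
    then show "((\<lambda>t. W0.gauge u * exp (- (2 * C * \<bar>t\<bar>))) \<longlongrightarrow> W0.gauge u) (at 0)"
      by simp
  qed simp
  then show ?thesis
  proof (intro tendsto_unique_maximizer[where \<phi> = "\<lambda>v. (u \<bullet> v) / h 0 v"])
    show "compact \<Omega>" "continuous_on \<Omega> (\<lambda>v. (u \<bullet> v) / h 0 v)" "a \<in> \<Omega>"
      by (fact compact_Omega W0.continuous_on_ratio \<open>a \<in> \<Omega>\<close>)+
  qed (simp_all add: gauge_a W0.ratio_less_unique_maximizer[OF a, unfolded gauge_a]
      eventually_gauss_map_at_in_Omega)
qed

lemma has_real_derivative_ln_gauge_at:
  assumes u: "u \<in> sphere 0 1" and a: "W0.maximizers u = {a}"
  shows "((\<lambda>t. ln (gauge_at t u)) has_real_derivative - f a) (at 0)"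
proof -
  let ?D = "\<lambda>t. ln (W0.gauge u) - ln (gauge_at t u)"
  let ?b = "\<lambda>t. gauss_map_at t u"
  have a_max: "a \<in> W0.maximizers u" and "a \<in> \<Omega>"
    using a by (auto simp: W0.maximizers_def)
  have lim_b: "((\<lambda>t. log_increment t (?b t) / t) \<longlongrightarrow> f a) (at 0)"
    by (rule tendsto_log_increment_quotient[OF eventually_gauss_map_at_in_Omega
        tendsto_gauss_map_at[OF u a] \<open>a \<in> \<Omega>\<close>])
  have lim_a: "((\<lambda>t. log_increment t a / t) \<longlongrightarrow> f a) (at 0)"
    using \<open>a \<in> \<Omega>\<close> by (intro tendsto_log_increment_quotient) auto
  have "((\<lambda>t. ?D t / t - f a) \<longlongrightarrow> 0) (at 0)"
  proof (rule Lim_null_comparison)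
    show "\<forall>\<^sub>F t in at 0. norm (?D t / t - f a)
        \<le> \<bar>log_increment t (?b t) / t - f a\<bar> + \<bar>log_increment t a / t - f a\<bar>"
      using eventually_abs_less_delta eventually_neq_at_within[of 0 0 UNIV]
    proof eventually_elim
      case (elim t)
      have "log_increment t (?b t) \<le> ?D t" "?D t \<le> log_increment t a"
        using log_increment_gauss_map_at_le[OF elim(1) u a_max]
          ln_gauge_diff_le_log_increment[OF elim(1) u a_max] by simp_all
      then have "log_increment t (?b t) / t \<le> ?D t / t \<and> ?D t / t \<le> log_increment t a / t \<or>
          log_increment t a / t \<le> ?D t / t \<and> ?D t / t \<le> log_increment t (?b t) / t"
        using elim(2) by (cases "t > 0") (auto intro: divide_right_mono divide_right_mono_neg)
      then show ?case
        by auto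
    qed
    show "((\<lambda>t. \<bar>log_increment t (?b t) / t - f a\<bar> + \<bar>log_increment t a / t - f a\<bar>) \<longlongrightarrow> 0) (at 0)"
      using lim_b lim_a by (intro tendsto_add_zero tendsto_rabs_zero LIM_zero)
  qed
  then have "((\<lambda>t. - (?D t / t)) \<longlongrightarrow> - f a) (at 0)"
    by (rule tendsto_minus[OF LIM_zero_cancel])
  then show ?thesis
    by (simp add: has_field_derivative_iff minus_divide_left)
qed

lemma abs_ln_gauge_at_diff_le:
  assumes t: "\<bar>t\<bar> < \<delta>" and u: "u \<in> sphere 0 1" and K: "\<forall>v\<in>\<Omega>. \<bar>log_increment t v\<bar> \<le> K"
  shows "\<bar>ln (gauge_at t u) - ln (W0.gauge u)\<bar> \<le> K"
proof -
  have "\<bar>log_increment t (gauss_map_at t u)\<bar> \<le> K" "\<bar>log_increment t (W0.gauss_map u)\<bar> \<le> K"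
    using K gauss_map_at_in_Omega[OF t] W0.gauss_map_in_Omega by blast+
  with log_increment_gauss_map_at_le[OF t u W0.gauss_map_in_maximizers]
    ln_gauge_diff_le_log_increment[OF t u W0.gauss_map_in_maximizers]
  show ?thesis
    by (simp add: abs_le_iff)
qed

lemma dual_density_at_eq:
  assumes t: "\<bar>t\<bar> < \<delta>" and u: "u \<in> sphere 0 1"
  shows "dual_density q j (wulff_shape \<Omega> (h t)) Q u =
    dual_density q j (wulff_shape \<Omega> (h 0)) Q u * exp (q * (ln (W0.gauge u) - ln (gauge_at t u)))"
proof -
  have radial: "radial_fun (wulff_shape \<Omega> (h s)) u powr q = exp (- q * ln (gauge_at s u))"
    if "\<bar>s\<bar> < \<delta>" for s
  proof -
    interpret Ws: wulff_generator \<Omega> "h s"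
      by (rule wulff_generator_at[OF that])
    show ?thesis
      using Ws.gauge_pos[OF u] by (simp add: Ws.radial_fun_W[OF u] powr_def ln_div)
  qed
  show ?thesis
    using radial[OF t] radial[of 0] delta_pos
    by (simp add: dual_density_def exp_add[symmetric] algebra_simps)
qed

lemma has_real_derivative_dual_density:
  assumes u: "u \<in> sphere 0 1 - W0.singular_directions"
  shows "((\<lambda>t. dual_density q j (wulff_shape \<Omega> (h t)) Q u) has_real_derivative
      q * f (W0.gauss_map u) * dual_density q j W0.W Q u) (at 0)"
proof -
  let ?a = "W0.gauss_map u" and ?d = "dual_density q j W0.W Q u"
  have "W0.maximizers u = {?a}"
    using W0.normals_eq_gauss_map(2) u by blast
  with u have "((\<lambda>t. ln (gauge_at t u)) has_real_derivative - f ?a) (at 0)"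
    by (intro has_real_derivative_ln_gauge_at) auto
  then have "((\<lambda>t. ln (W0.gauge u) - ln (gauge_at t u)) has_real_derivative 0 - - f ?a) (at 0)"
    by (intro DERIV_diff DERIV_const)
  then have "((\<lambda>t. exp (q * (ln (W0.gauge u) - ln (gauge_at t u)))) has_real_derivative
      exp (q * (ln (W0.gauge u) - ln (gauge_at 0 u))) * (q * (0 - - f ?a))) (at 0)"
    by (rule DERIV_chain2[OF DERIV_exp DERIV_cmult])
  then have "((\<lambda>t. ?d * exp (q * (ln (W0.gauge u) - ln (gauge_at t u)))) has_real_derivative
      ?d * (exp (q * (ln (W0.gauge u) - ln (gauge_at 0 u))) * (q * (0 - - f ?a)))) (at 0)"
    by (rule DERIV_cmult)
  then have deriv: "((\<lambda>t. ?d * exp (q * (ln (W0.gauge u) - ln (gauge_at t u)))) has_real_derivative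
      q * f ?a * ?d) (at 0)"
    by (simp add: mult_ac)
  have ev: "\<forall>\<^sub>F t in nhds 0. ?d * exp (q * (ln (W0.gauge u) - ln (gauge_at t u))) =
      dual_density q j (wulff_shape \<Omega> (h t)) Q u"
    using eventually_nhds_abs_less_delta
    by eventually_elim (rule dual_density_at_eq[symmetric, OF _ DiffD1[OF u]])
  show ?thesis
    using deriv unfolding DERIV_cong_ev[OF refl ev refl] .
qed

lemma eventually_dual_density_quotient_bounded:
  assumes Q: "star_body_o Q"
  shows "\<exists>B. \<forall>\<^sub>F t in at 0. \<forall>u\<in>sphere 0 1.
    \<bar>(dual_density q j (wulff_shape \<Omega> (h t)) Q u - dual_density q j W0.W Q u) / t\<bar> \<le> B"
proof -
  obtain D where D: "\<forall>u\<in>sphere 0 1. \<bar>dual_density q j W0.W Q u\<bar> \<le> D"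
    using compact_imp_bounded[OF compact_continuous_image[OF W0.continuous_on_dual_density[OF Q, of q j]
          compact_sphere]]
    unfolding bounded_iff by auto
  obtain C where "C \<ge> 0" and C: "\<forall>\<^sub>F t in at 0. \<forall>v\<in>\<Omega>. \<bar>log_increment t v\<bar> \<le> C * \<bar>t\<bar>"
    using eventually_abs_log_increment_le by blast
  have "\<forall>\<^sub>F t in at (0::real). \<bar>t\<bar> < 1"
    unfolding eventually_at by (auto intro!: exI[of _ 1] simp: dist_real_def)
  with C eventually_abs_less_delta eventually_neq_at_within[of 0 0 UNIV]
  have "\<forall>\<^sub>F t in at 0. \<forall>u\<in>sphere 0 1.
    \<bar>(dual_density q j (wulff_shape \<Omega> (h t)) Q u - dual_density q j W0.W Q u) / t\<bar>
      \<le> D * (\<bar>q\<bar> * C * exp (\<bar>q\<bar> * C))"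
  proof eventually_elim
    case (elim t)
    show ?case
    proof
      fix u :: 'a assume u: "u \<in> sphere 0 1"
      define x where "x = q * (ln (W0.gauge u) - ln (gauge_at t u))"
      have "\<bar>ln (gauge_at t u) - ln (W0.gauge u)\<bar> \<le> C * \<bar>t\<bar>"
        by (rule abs_ln_gauge_at_diff_le[OF elim(2) u elim(1)])
      then have "\<bar>x\<bar> \<le> \<bar>q\<bar> * (C * \<bar>t\<bar>)"
        unfolding x_def abs_mult by (simp add: abs_minus_commute mult_left_mono)
      moreover have "\<bar>q\<bar> * (C * \<bar>t\<bar>) \<le> \<bar>q\<bar> * C"
        using elim(4) \<open>C \<ge> 0\<close> by (intro mult_left_mono) (auto intro: mult_left_le)
      ultimately have "\<bar>exp x - 1\<bar> \<le> (\<bar>q\<bar> * (C * \<bar>t\<bar>)) * exp (\<bar>q\<bar> * C)"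
        using abs_exp_minus_one_le[of x] by (meson exp_le_cancel_iff mult_mono abs_ge_zero exp_ge_zero order_trans)
      then have "\<bar>dual_density q j W0.W Q u\<bar> * \<bar>exp x - 1\<bar> \<le> D * (\<bar>t\<bar> * (\<bar>q\<bar> * C * exp (\<bar>q\<bar> * C)))"
        using D u by (intro mult_mono) (auto simp: ac_simps)
      moreover have "dual_density q j (wulff_shape \<Omega> (h t)) Q u - dual_density q j W0.W Q u
          = dual_density q j W0.W Q u * (exp x - 1)"
        using dual_density_at_eq[OF elim(2) u] by (simp add: x_def algebra_simps)
      ultimately show "\<bar>(dual_density q j (wulff_shape \<Omega> (h t)) Q u - dual_density q j W0.W Q u) / t\<bar>
          \<le> D * (\<bar>q\<bar> * C * exp (\<bar>q\<bar> * C))"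
        using elim(3) by (simp add: abs_mult divide_le_eq mult_ac)
    qed
  qed
  then show ?thesis by blast
qed

lemma continuous_on_dual_density_at:
  "\<bar>t\<bar> < \<delta> \<Longrightarrow> star_body_o Q \<Longrightarrow>
    continuous_on (sphere 0 1) (dual_density q j (wulff_shape \<Omega> (h t)) Q)"
  using wulff_generator.continuous_on_dual_density[OF wulff_generator_at] .

lemma dual_quermass_quotient_eq_integral:
  assumes Q: "star_body_o Q" and t: "\<bar>t\<bar> < \<delta>"
  shows "(dual_quermass q j (wulff_shape \<Omega> (h t)) Q - dual_quermass q j (wulff_shape \<Omega> (h 0)) Q) / t
    = (1 / real DIM('a)) * (\<integral>u. (dual_density q j (wulff_shape \<Omega> (h t)) Q u
        - dual_density q j (wulff_shape \<Omega> (h 0)) Q u) / t \<partial>sphere_measure)"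
proof -
  have t0: "\<bar>0::real\<bar> < \<delta>"
    using delta_pos by simp
  show ?thesis
    using integrable_continuous_on_sphere[OF continuous_on_dual_density_at[OF t Q]]
      integrable_continuous_on_sphere[OF continuous_on_dual_density_at[OF t0 Q]]
    by (simp add: dual_quermass_eq_integral integral_divide_zero Bochner_Integration.integral_diff
        diff_divide_distrib right_diff_distrib)
qed

lemma AE_tendsto_dual_density_quotient:
  "AE u in sphere_measure. ((\<lambda>t. (dual_density q j (wulff_shape \<Omega> (h t)) Q u - dual_density q j W0.W Q u) / t)
      \<longlongrightarrow> q * f (W0.gauss_map u) * dual_density q j W0.W Q u) (at 0)"
proof -
  have "AE u in sphere_measure. u \<notin> W0.singular_directions"
    using W0.subset_singular_directions_null by (intro AE_not_in) simp
  moreover have "AE u in sphere_measure. u \<in> sphere 0 1"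
    by (rule AE_I2) (simp add: space_sphere_measure)
  ultimately show ?thesis
  proof eventually_elim
    case (elim u)
    then show ?case
      using has_real_derivative_dual_density[of u q j Q] by (simp add: has_field_derivative_iff)
  qed
qed

lemma tendsto_dual_quermass_quotient:
  assumes Q: "star_body_o Q"
  shows "((\<lambda>t. (dual_quermass q j (wulff_shape \<Omega> (h t)) Q - dual_quermass q j (wulff_shape \<Omega> (h 0)) Q) / t)
     \<longlongrightarrow> q * (\<integral>v\<in>\<Omega>. f v \<partial>dual_curv_measure q j (wulff_shape \<Omega> (h 0)) Q)) (at 0)"
proof -
  let ?d = "\<lambda>t. dual_density q j (wulff_shape \<Omega> (h t)) Q"
  let ?L = "\<lambda>u. q * f (W0.gauss_map u) * ?d 0 u"
  have d_meas: "?d t \<in> borel_measurable sphere_measure" if "\<bar>t\<bar> < \<delta>" for t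
    by (rule borel_measurable_continuous_on_sphere[OF continuous_on_dual_density_at[OF that Q]])
  have d0_meas: "?d 0 \<in> borel_measurable sphere_measure"
    using d_meas delta_pos by simp
  obtain B where B: "\<forall>\<^sub>F t in at 0. \<forall>u\<in>sphere 0 1. \<bar>(?d t u - ?d 0 u) / t\<bar> \<le> B"
    using eventually_dual_density_quotient_bounded[OF Q] by blast
  have "((\<lambda>t. \<integral>u. (?d t u - ?d 0 u) / t \<partial>sphere_measure) \<longlongrightarrow> (\<integral>u. ?L u \<partial>sphere_measure)) (at 0)"
  proof (rule integral_dominated_convergence_at[OF _ _ _ AE_tendsto_dual_density_quotient])
    show "?L \<in> borel_measurable sphere_measure"
      using W0.borel_measurable_comp_gauss_map[OF continuous_f] d0_meas by measurable
    show "integrable sphere_measure (\<lambda>_. B)"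
      by (rule finite_measure.integrable_const[OF finite_measure_sphere_measure])
    show "\<forall>\<^sub>F t in at 0. (\<lambda>u. (?d t u - ?d 0 u) / t) \<in> borel_measurable sphere_measure
        \<and> (AE u in sphere_measure. norm ((?d t u - ?d 0 u) / t) \<le> B)"
      using B eventually_abs_less_delta
    proof eventually_elim
      case (elim t)
      then show ?case
        using d_meas[OF elim(2)] d0_meas by (auto intro!: AE_I2 simp: space_sphere_measure)
    qed
  qed
  then have "((\<lambda>t. (1 / real DIM('a)) * (\<integral>u. (?d t u - ?d 0 u) / t \<partial>sphere_measure))
      \<longlongrightarrow> (1 / real DIM('a)) * (\<integral>u. ?L u \<partial>sphere_measure)) (at 0)"
    by (rule tendsto_mult_left)
  moreover have "\<forall>\<^sub>F t in at 0. (1 / real DIM('a)) * (\<integral>u. (?d t u - ?d 0 u) / t \<partial>sphere_measure)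
      = (dual_quermass q j (wulff_shape \<Omega> (h t)) Q - dual_quermass q j (wulff_shape \<Omega> (h 0)) Q) / t"
    using eventually_abs_less_delta
    by eventually_elim (rule dual_quermass_quotient_eq_integral[OF Q, symmetric])
  ultimately have "((\<lambda>t. (dual_quermass q j (wulff_shape \<Omega> (h t)) Q
      - dual_quermass q j (wulff_shape \<Omega> (h 0)) Q) / t)
      \<longlongrightarrow> (1 / real DIM('a)) * (\<integral>u. ?L u \<partial>sphere_measure)) (at 0)"
    by (rule Lim_transform_eventually)
  moreover have "(1 / real DIM('a)) * (\<integral>u. ?L u \<partial>sphere_measure)
      = q * (\<integral>v\<in>\<Omega>. f v \<partial>dual_curv_measure q j (wulff_shape \<Omega> (h 0)) Q)"
    by (simp add: W0.integral_dual_curv_measure[OF Q continuous_f] mult_ac)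
  ultimately show ?thesis
    by simp
qed

end

theorem theorem4p2:
  fixes \<Omega> :: "'a::euclidean_space set" and h :: "real \<Rightarrow> 'a \<Rightarrow> real" and f :: "'a \<Rightarrow> real"
    and Q :: "'a set" and q j :: real
  assumes "closed \<Omega>" and "\<Omega> \<subseteq> sphere 0 1"
    and "\<forall>u\<in>sphere 0 1. \<not> \<Omega> \<subseteq> closed_hemisphere u"
    and "continuous_on \<Omega> (h 0)" and "\<forall>v\<in>\<Omega>. h 0 v > 0"
    and "continuous_on \<Omega> f"
    and "log_family \<Omega> h f"
    and "star_body_o Q" and "j \<noteq> real DIM('a)" and "q \<noteq> 0"
  shows "((\<lambda>t. (dual_quermass q j (wulff_shape \<Omega> (h t)) Q
                 - dual_quermass q j (wulff_shape \<Omega> (h 0)) Q) / t)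
          \<longlongrightarrow> q * (\<integral>v\<in>\<Omega>. f v \<partial>dual_curv_measure q j (wulff_shape \<Omega> (h 0)) Q)) (at 0)"
proof -
  from assms(7) obtain \<delta> e where "\<delta> > 0"
    and family: "\<forall>t\<in>{-\<delta><..<\<delta>}. continuous_on \<Omega> (h t) \<and> (\<forall>v\<in>\<Omega>. h t v > 0)
         \<and> continuous_on \<Omega> (e t) \<and> (\<forall>v\<in>\<Omega>. ln (h t v) = ln (h 0 v) + t * f v + e t v)"
    and remainder: "uniform_limit \<Omega> (\<lambda>t v. e t v / t) (\<lambda>v. 0) (at 0)"
    unfolding log_family_def by blast
  have "compact \<Omega>"
    using assms(1) bounded_subset[OF bounded_sphere assms(2)] by (simp add: compact_eq_bounded_closed)
  interpret log_wulff_family \<Omega> h f \<delta> e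
  proof
    fix t :: real assume "\<bar>t\<bar> < \<delta>"
    then have "t \<in> {-\<delta><..<\<delta>}"
      by (simp add: abs_less_iff)
    with family show "continuous_on \<Omega> (h t) \<and> (\<forall>v\<in>\<Omega>. h t v > 0)
        \<and> (\<forall>v\<in>\<Omega>. ln (h t v) = ln (h 0 v) + t * f v + e t v)"
      by blast
  qed (fact \<open>compact \<Omega>\<close> assms(2,3,6) \<open>\<delta> > 0\<close> remainder)+
  show ?thesis
    by (rule tendsto_dual_quermass_quotient[OF assms(8)])
qed

end
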